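(* Let $F$ and $G$ be Fourier matrices of the same size $N$, with indexing groups $I_F$ and $I_G$, and let $\chi',\chi'':I_G\to I_F$ be bijections. If $P_{\chi'}\,F\,P_{\chi''}^T=G$, then $\chi'$ and $\chi''$ are group isomorphisms.
   Context: For $n\ge1$, $F_n$ is the $n\times n$ matrix with rows and columns indexed by $\mathbb Z_n$ and entries $(F_n)_{i,j}=e^{2\pi i\,\tilde i\tilde j/n}$ ($\tilde i,\tilde j$ any integer representatives). A Fourier matrix is $F=F_{N_1}\otimes\cdots\otimes F_{N_r}$ of size $N=N_1\cdots N_r$, indexed by its indexing group $I_F=\mathbb Z_{N_1}\times\cdots\times\mathbb Z_{N_r}$: for $i=(i_1,\dots,i_r),j=(j_1,\dots,j_r)\in I_F$, $F_{i,j}=\prod_x (F_{N_x})_{i_x,j_x}$, and group index $i$ corresponds to the position of $i$ in the lexicographic order of $I_F$. For Fourier matrices $F,G$ of size $N$ and a bijection $\varphi:I_G\to I_F$, $P_\varphi$ is the $N\times N$ permutation matrix whose rows are indexed by $I_G$ and columns by $I_F$, with $(P_\varphi)_{i,\varphi(i)}=1$ for all $i\in I_G$ and zeros elsewhere. *)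

theory Defs
  imports Complex_Main "HOL-Algebra.Group"
begin

text \<open>An indexing group Z_{N_1} x ... x Z_{N_r} is described by the list Ns = [N_1,...,N_r]
  (all N_x \<ge> 1). Its elements are the nat lists i of length r with i!x < N_x.\<close>

definition idx_set :: "nat list \<Rightarrow> nat list set" where
  "idx_set Ns = {i. length i = length Ns \<and> (\<forall>x<length Ns. i ! x < Ns ! x)}"

definition idx_group :: "nat list \<Rightarrow> nat list monoid" where
  "idx_group Ns = \<lparr> carrier = idx_set Ns,
      mult = (\<lambda>i j. map (\<lambda>x. (i ! x + j ! x) mod (Ns ! x)) [0..<length Ns]),
      one = replicate (length Ns) 0 \<rparr>"

definition valid_sizes :: "nat list \<Rightarrow> bool" where
  "valid_sizes Ns \<longleftrightarrow> (\<forall>x\<in>set Ns. 1 \<le> x)"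

text \<open>Matrices are functions of row and column index; F is the Fourier matrix
  F_{N_1} \<otimes> ... \<otimes> F_{N_r} indexed by its indexing group.\<close>

definition fourier :: "nat list \<Rightarrow> nat list \<Rightarrow> nat list \<Rightarrow> complex" where
  "fourier Ns i j = (\<Prod>x<length Ns.
      exp (2 * of_real pi * \<i> * of_nat (i ! x) * of_nat (j ! x) / of_nat (Ns ! x)))"

definition perm_mat :: "('a \<Rightarrow> 'b) \<Rightarrow> 'a \<Rightarrow> 'b \<Rightarrow> complex" where
  "perm_mat \<phi> i j = (if j = \<phi> i then 1 else 0)"

definition mat_transpose :: "('a \<Rightarrow> 'b \<Rightarrow> complex) \<Rightarrow> 'b \<Rightarrow> 'a \<Rightarrow> complex" where
  "mat_transpose A i j = A j i"

definition mat_mult :: "'b set \<Rightarrow> ('a \<Rightarrow> 'b \<Rightarrow> complex) \<Rightarrow> ('b \<Rightarrow> 'c \<Rightarrow> complex) \<Rightarrow> 'a \<Rightarrow> 'c \<Rightarrow> complex" where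
  "mat_mult K A B i k = (\<Sum>j\<in>K. A i j * B j k)"

end

theory Submission
  imports Defs "HOL-Analysis.Analysis"
begin

text \<open>Each row of a Fourier matrix is a character of the indexing group in the row index, and
  distinct group elements give distinct rows (test against the unit vectors). The hypothesis says
  \<open>F (\<chi>' a) (\<chi>'' c) = G a c\<close>. Multiplicativity of \<open>G\<close> in \<open>a\<close> then shows that the rows of
  \<open>F\<close> at \<open>\<chi>' (a + b)\<close> and at \<open>\<chi>' a + \<chi>' b\<close> agree on every column \<open>\<chi>'' c\<close>, i.e. on all columns,
  so \<open>\<chi>'\<close> is additive. Symmetry of Fourier matrices exchanges the roles of \<open>\<chi>'\<close> and \<open>\<chi>''\<close>.\<close>

lemma exp_2pi_frac_mod:
  assumes "(N::nat) > 0"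
  shows "exp (2 * of_real pi * \<i> * of_nat (a mod N) * of_nat y / of_nat N)
       = exp (2 * of_real pi * \<i> * of_nat a * of_nat y / of_nat N)"
proof -
  have "(of_nat a :: complex) = of_nat (a mod N) + of_nat N * of_nat (a div N)"
    by (metis mod_mult_div_eq of_nat_add of_nat_mult add.commute)
  then have "2 * of_real pi * \<i> * of_nat a * of_nat y / of_nat N
     = 2 * of_real pi * \<i> * of_nat (a mod N) * of_nat y / of_nat N
       + \<i> * (of_nat (a div N * y) * (of_real pi * 2))"
    using assms by (simp add: field_simps)
  then show ?thesis
    by (simp only: exp_add exp_2pi_1_nat mult_1_right)
qed

lemma exp_2pi_frac_eq_imp_mod_eq:
  assumes "(N::nat) > 0"
    and "exp (2 * of_real pi * \<i> * of_nat a / of_nat N) = exp (2 * of_real pi * \<i> * of_nat b / of_nat N)"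
  shows "a mod N = b mod N"
proof -
  obtain n :: int where
    "2 * of_real pi * \<i> * of_nat a / of_nat N
       = 2 * of_real pi * \<i> * of_nat b / of_nat N + (of_int (2 * n) * pi) * \<i>"
    using assms(2) exp_eq by blast
  then have "2 * of_real pi * \<i> * of_nat a
       = 2 * of_real pi * \<i> * (of_nat b + of_int n * (of_nat N :: complex))"
    using assms(1) by (simp add: field_simps)
  then have "(of_int (int a) :: complex) = of_int (int b + n * int N)"
    by simp
  then have "int a = int b + n * int N"
    by (simp only: of_int_eq_iff)
  then have "int a mod int N = int b mod int N"
    by simp
  then show ?thesis
    by (simp flip: of_nat_mod)
qed

lemma finite_idx_set: "finite (idx_set Ns)"
proof (rule finite_subset)
  let ?B = "Max (insert 0 (set Ns))"
  show "idx_set Ns \<subseteq> {xs. set xs \<subseteq> {..?B} \<and> length xs = length Ns}"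
  proof (intro subsetI CollectI conjI)
    fix i v assume i: "i \<in> idx_set Ns"
    then show "length i = length Ns"
      by (simp add: idx_set_def)
    show "v \<in> {..?B}" if v: "v \<in> set i"
    proof -
      obtain x where x: "x < length Ns" "v = i ! x"
        using v \<open>length i = length Ns\<close> by (auto simp: in_set_conv_nth)
      then have "v < Ns ! x"
        using i by (simp add: idx_set_def)
      also have "Ns ! x \<le> ?B"
        using x(1) by (intro Max_ge) auto
      finally show "v \<in> {..?B}"
        by simp
    qed
  qed
  show "finite {xs. set xs \<subseteq> {..?B} \<and> length xs = length Ns}"
    by (rule finite_lists_length_eq) simp
qed

lemma valid_sizes_nth_pos: "valid_sizes Ns \<Longrightarrow> x < length Ns \<Longrightarrow> 0 < Ns ! x"
  using nth_mem by (fastforce simp: valid_sizes_def)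

lemma idx_group_mult_nth:
  "x < length Ns \<Longrightarrow> (i \<otimes>\<^bsub>idx_group Ns\<^esub> j) ! x = (i ! x + j ! x) mod Ns ! x"
  by (simp add: idx_group_def)

lemma idx_group_mult_closed:
  assumes "valid_sizes Ns"
  shows "i \<otimes>\<^bsub>idx_group Ns\<^esub> j \<in> idx_set Ns"
  using valid_sizes_nth_pos[OF assms] by (simp add: idx_set_def idx_group_def)

lemma fourier_commute: "fourier Ns i j = fourier Ns j i"
  unfolding fourier_def by (simp add: mult_ac)

lemma fourier_mult_left:
  assumes "valid_sizes Ns"
  shows "fourier Ns (i \<otimes>\<^bsub>idx_group Ns\<^esub> j) y = fourier Ns i y * fourier Ns j y"
  unfolding fourier_def prod.distrib[symmetric]
proof (rule prod.cong[OF refl])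
  fix x assume "x \<in> {..<length Ns}"
  then have x: "x < length Ns" by simp
  let ?e = "\<lambda>a. exp (2 * of_real pi * \<i> * of_nat a * of_nat (y ! x) / of_nat (Ns ! x))"
  have "?e ((i \<otimes>\<^bsub>idx_group Ns\<^esub> j) ! x) = ?e (i ! x + j ! x)"
    using exp_2pi_frac_mod[OF valid_sizes_nth_pos[OF assms x]] by (simp add: idx_group_mult_nth x)
  also have "\<dots> = ?e (i ! x) * ?e (j ! x)"
    by (simp add: exp_add[symmetric] add_divide_distrib distrib_left distrib_right)
  finally show "?e ((i \<otimes>\<^bsub>idx_group Ns\<^esub> j) ! x) = ?e (i ! x) * ?e (j ! x)" .
qed

lemma fourier_unit_vector:
  assumes "valid_sizes Ns" "k < length Ns"
  shows "fourier Ns x (map (\<lambda>t. if t = k then 1 mod Ns ! t else 0) [0..<length Ns])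
     = exp (2 * of_real pi * \<i> * of_nat (x ! k) / of_nat (Ns ! k))"
proof -
  let ?e = "exp (2 * of_real pi * \<i> * of_nat (1 mod Ns ! k) * of_nat (x ! k) / of_nat (Ns ! k))"
  have "fourier Ns x (map (\<lambda>t. if t = k then 1 mod Ns ! t else 0) [0..<length Ns])
      = (\<Prod>t<length Ns. if t = k then ?e else 1)"
    unfolding fourier_def by (rule prod.cong) (auto simp: mult_ac)
  also have "\<dots> = ?e"
    using assms(2) by simp
  also have "\<dots> = exp (2 * of_real pi * \<i> * of_nat (x ! k) / of_nat (Ns ! k))"
    using exp_2pi_frac_mod[OF valid_sizes_nth_pos[OF assms], of 1 "x ! k"] by simp
  finally show ?thesis .
qed

lemma fourier_row_inj:
  assumes "valid_sizes Ns" "x \<in> idx_set Ns" "x' \<in> idx_set Ns"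
    and rows_eq: "\<And>y. y \<in> idx_set Ns \<Longrightarrow> fourier Ns x y = fourier Ns x' y"
  shows "x = x'"
proof (rule nth_equalityI)
  show "length x = length x'"
    using assms by (simp add: idx_set_def)
  fix k assume "k < length x"
  then have k: "k < length Ns"
    using assms(2) by (simp add: idx_set_def)
  \<comment> \<open>\<open>1 mod N\<^sub>k\<close> instead of \<open>1\<close> keeps the test vector in the index set when \<open>N\<^sub>k = 1\<close>.\<close>
  let ?u = "map (\<lambda>t. if t = k then 1 mod Ns ! t else 0) [0..<length Ns]"
  have "?u \<in> idx_set Ns"
    using valid_sizes_nth_pos[OF assms(1)] by (force simp: idx_set_def)
  then have "exp (2 * of_real pi * \<i> * of_nat (x ! k) / of_nat (Ns ! k))
      = exp (2 * of_real pi * \<i> * of_nat (x' ! k) / of_nat (Ns ! k))"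
    using rows_eq by (simp add: fourier_unit_vector[OF assms(1) k, symmetric])
  then have "x ! k mod Ns ! k = x' ! k mod Ns ! k"
    by (rule exp_2pi_frac_eq_imp_mod_eq[OF valid_sizes_nth_pos[OF assms(1) k]])
  then show "x ! k = x' ! k"
    using assms(2,3) k by (simp add: idx_set_def)
qed

lemma perm_fourier_perm_transpose_entry:
  assumes "\<chi>1 a \<in> idx_set Ns" "\<chi>2 c \<in> idx_set Ns"
  shows "mat_mult (idx_set Ns) (mat_mult (idx_set Ns) (perm_mat \<chi>1) (fourier Ns))
           (mat_transpose (perm_mat \<chi>2)) a c = fourier Ns (\<chi>1 a) (\<chi>2 c)"
proof -
  have row: "mat_mult (idx_set Ns) (perm_mat \<chi>1) (fourier Ns) a j = fourier Ns (\<chi>1 a) j" for j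
  proof -
    have "mat_mult (idx_set Ns) (perm_mat \<chi>1) (fourier Ns) a j
        = (\<Sum>i\<in>idx_set Ns. if i = \<chi>1 a then fourier Ns i j else 0)"
      unfolding mat_mult_def perm_mat_def by (rule sum.cong) auto
    then show ?thesis
      using assms(1) finite_idx_set by simp
  qed
  have "mat_mult (idx_set Ns) (mat_mult (idx_set Ns) (perm_mat \<chi>1) (fourier Ns))
          (mat_transpose (perm_mat \<chi>2)) a c
      = (\<Sum>j\<in>idx_set Ns. if j = \<chi>2 c then fourier Ns (\<chi>1 a) j else 0)"
    unfolding mat_mult_def[of _ _ "mat_transpose _"] row mat_transpose_def perm_mat_def
    by (rule sum.cong) auto
  then show ?thesis
    using assms(2) finite_idx_set by simp
qed

lemma fourier_compatible_imp_iso: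
  assumes vN: "valid_sizes Ns" and vM: "valid_sizes Ms"
    and f: "bij_betw f (idx_set Ms) (idx_set Ns)"
    and g: "idx_set Ns \<subseteq> g ` idx_set Ms"
    and compat: "\<And>a c. a \<in> idx_set Ms \<Longrightarrow> c \<in> idx_set Ms \<Longrightarrow> fourier Ns (f a) (g c) = fourier Ms a c"
  shows "f \<in> iso (idx_group Ms) (idx_group Ns)"
proof -
  have f_into: "f a \<in> idx_set Ns" if "a \<in> idx_set Ms" for a
    using f that bij_betwE by blast
  have "f (a \<otimes>\<^bsub>idx_group Ms\<^esub> b) = f a \<otimes>\<^bsub>idx_group Ns\<^esub> f b"
    if a: "a \<in> idx_set Ms" and b: "b \<in> idx_set Ms" for a b
  proof (rule fourier_row_inj[OF vN])
    show "f (a \<otimes>\<^bsub>idx_group Ms\<^esub> b) \<in> idx_set Ns"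
      using f_into idx_group_mult_closed[OF vM] by blast
    show "f a \<otimes>\<^bsub>idx_group Ns\<^esub> f b \<in> idx_set Ns"
      using idx_group_mult_closed[OF vN] .
    fix y assume "y \<in> idx_set Ns"
    then obtain c where c: "c \<in> idx_set Ms" "y = g c"
      using g by blast
    have "fourier Ns (f (a \<otimes>\<^bsub>idx_group Ms\<^esub> b)) y = fourier Ms (a \<otimes>\<^bsub>idx_group Ms\<^esub> b) c"
      using compat[OF _ c(1)] idx_group_mult_closed[OF vM] c(2) by simp
    also have "\<dots> = fourier Ms a c * fourier Ms b c"
      by (rule fourier_mult_left[OF vM])
    also have "\<dots> = fourier Ns (f a) y * fourier Ns (f b) y"
      using compat[OF a c(1)] compat[OF b c(1)] c(2) by simp
    also have "\<dots> = fourier Ns (f a \<otimes>\<^bsub>idx_group Ns\<^esub> f b) y"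
      by (rule fourier_mult_left[OF vN, symmetric])
    finally show "fourier Ns (f (a \<otimes>\<^bsub>idx_group Ms\<^esub> b)) y
        = fourier Ns (f a \<otimes>\<^bsub>idx_group Ns\<^esub> f b) y" .
  qed
  then show ?thesis
    using f f_into by (auto simp: iso_def hom_def idx_group_def[of Ms] idx_group_def[of Ns])
qed

theorem lemma4p3:
  fixes Ns Ms :: "nat list" and \<chi>1 \<chi>2 :: "nat list \<Rightarrow> nat list"
  assumes "valid_sizes Ns" and "valid_sizes Ms"
    and "prod_list Ns = prod_list Ms"
    and "bij_betw \<chi>1 (idx_set Ms) (idx_set Ns)"
    and "bij_betw \<chi>2 (idx_set Ms) (idx_set Ns)"
    and "\<forall>a\<in>idx_set Ms. \<forall>c\<in>idx_set Ms.
           mat_mult (idx_set Ns) (mat_mult (idx_set Ns) (perm_mat \<chi>1) (fourier Ns))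
              (mat_transpose (perm_mat \<chi>2)) a c = fourier Ms a c"
  shows "\<chi>1 \<in> iso (idx_group Ms) (idx_group Ns) \<and> \<chi>2 \<in> iso (idx_group Ms) (idx_group Ns)"
proof -
  have compat: "fourier Ns (\<chi>1 a) (\<chi>2 c) = fourier Ms a c"
    if "a \<in> idx_set Ms" "c \<in> idx_set Ms" for a c
    using assms(6) that perm_fourier_perm_transpose_entry[of \<chi>1 a Ns \<chi>2 c] assms(4,5) bij_betwE
    by metis
  have "\<chi>1 \<in> iso (idx_group Ms) (idx_group Ns)"
    by (rule fourier_compatible_imp_iso[OF assms(1,2,4) _ compat])
      (use assms(5) in \<open>simp add: bij_betw_imp_surj_on\<close>)
  moreover have "\<chi>2 \<in> iso (idx_group Ms) (idx_group Ns)"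
    by (rule fourier_compatible_imp_iso[OF assms(1,2,5), of \<chi>1])
      (use assms(4) in \<open>simp add: bij_betw_imp_surj_on\<close>, metis compat fourier_commute)
  ultimately show ?thesis ..
qed

end
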